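(* Let $R$ be a ring and $\mathfrak p\subset R$ a prime ideal. If $R$ is purely $F$-regular along $\mathfrak p$, then the polynomial ring $R[t]$ is purely $F$-regular along the prime ideal $\mathfrak p[t]=\mathfrak pR[t]$.
   Context: All rings are noetherian $F$-finite commutative $\mathbb F_p$-algebras. $F^e_*R$ is $R$ viewed as an $R$-module via $r\mapsto r^{p^e}$; $\mathcal C_{e,R}=\operatorname{Hom}_R(F^e_*R,R)$. For an ideal $\mathfrak a$, $\phi\in\mathcal C_{e,R}$ is $\mathfrak a$-compatible if $\phi(F^e_*\mathfrak a)\subseteq\mathfrak a$. For a prime $\mathfrak p\subset R$, $R$ is purely $F$-regular along $\mathfrak p$ if (i) there exist $e>0$ and a $\mathfrak p$-compatible $\phi\in\mathcal C_{e,R}$ with $\phi(F^e_*R)\not\subseteq\mathfrak p$, and (ii) every proper ideal $\mathfrak b\subsetneq R$ that is $\phi$-compatible for every $e>0$ and every $\mathfrak p$-compatible $\phi\in\mathcal C_{e,R}$ satisfies $\mathfrak b\subseteq\mathfrak p$. *)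

theory Defs
  imports "HOL-Computational_Algebra.Polynomial"
begin

text \<open>Ideals of a commutative ring (type-class idiom: the ring is the whole type).\<close>
definition is_ideal :: "'a::comm_ring_1 set \<Rightarrow> bool" where
  "is_ideal I \<longleftrightarrow> 0 \<in> I \<and> (\<forall>x\<in>I. \<forall>y\<in>I. x + y \<in> I) \<and> (\<forall>r x. x \<in> I \<longrightarrow> r * x \<in> I)"

definition is_prime_ideal :: "'a::comm_ring_1 set \<Rightarrow> bool" where
  "is_prime_ideal P \<longleftrightarrow> is_ideal P \<and> P \<noteq> UNIV \<and> (\<forall>x y. x * y \<in> P \<longrightarrow> x \<in> P \<or> y \<in> P)"

definition noetherian_ring :: "'a::comm_ring_1 itself \<Rightarrow> bool" where
  "noetherian_ring _ \<longleftrightarrow> (\<forall>f :: nat \<Rightarrow> 'a set. (\<forall>n. is_ideal (f n)) \<and> (\<forall>n. f n \<subseteq> f (Suc n))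
      \<longrightarrow> (\<exists>N. \<forall>n\<ge>N. f n = f N))"

text \<open>F-finite: F_*R is a finitely generated R-module, i.e. there is a finite set S with
  every x of the form sum over s in S of r_s^p * s.\<close>
definition F_finite :: "nat \<Rightarrow> 'a::comm_ring_1 itself \<Rightarrow> bool" where
  "F_finite p _ \<longleftrightarrow> (\<exists>S :: 'a set. finite S \<and> (\<forall>x. \<exists>c. x = (\<Sum>s\<in>S. c s ^ p * s)))"

text \<open>Elements of C_{e,R} = Hom_R(F^e_*R, R): additive maps phi with
  phi(r^(p^e) x) = r phi(x).\<close>
definition cartier_map :: "nat \<Rightarrow> nat \<Rightarrow> ('a::comm_ring_1 \<Rightarrow> 'a) \<Rightarrow> bool" where
  "cartier_map p e \<phi> \<longleftrightarrow> (\<forall>x y. \<phi> (x + y) = \<phi> x + \<phi> y) \<and> (\<forall>r x. \<phi> (r ^ (p ^ e) * x) = r * \<phi> x)"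

definition compatible :: "('a \<Rightarrow> 'a) \<Rightarrow> 'a set \<Rightarrow> bool" where
  "compatible \<phi> I \<longleftrightarrow> \<phi> ` I \<subseteq> I"

definition purely_F_regular_along :: "nat \<Rightarrow> 'a::comm_ring_1 set \<Rightarrow> bool" where
  "purely_F_regular_along p P \<longleftrightarrow>
     (\<exists>e>0. \<exists>\<phi>. cartier_map p e \<phi> \<and> compatible \<phi> P \<and> \<not> (range \<phi> \<subseteq> P)) \<and>
     (\<forall>B. is_ideal B \<and> B \<noteq> UNIV \<and>
          (\<forall>e>0. \<forall>\<phi>. cartier_map p e \<phi> \<and> compatible \<phi> P \<longrightarrow> compatible \<phi> B)
          \<longrightarrow> B \<subseteq> P)"

text \<open>The extended ideal P[t] = P R[t]: polynomials all of whose coefficients lie in P.\<close>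
definition poly_ext_ideal :: "'a::comm_ring_1 set \<Rightarrow> 'a poly set" where
  "poly_ext_ideal P = {f. \<forall>i. coeff f i \<in> P}"

end

theory Submission
  imports Defs "HOL-Computational_Algebra.Primes"
begin

text \<open>The extended ideal P[t] is prime by Gauss' lemma. A P-compatible map \<open>\<phi>\<close> of exponent e
  and a residue m < q = p^e give the P[t]-compatible map sending \<open>\<Sum> a_i t^i\<close> to
  \<open>\<Sum> \<phi>(a_(jq+m)) t^j\<close>, of the same exponent; with m = 0 it witnesses condition (i).
  For (ii), let B be a proper ideal compatible with all such maps. Its constants form a proper
  ideal of R compatible with every P-compatible map, hence lie in P. If some f in B had a
  coefficient a = a_n outside P, pick a P-compatible \<open>\<phi>\<close> with q > deg f and \<open>\<phi>(a) \<notin> P\<close>;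
  the lifted map for m = n sends f to the constant \<open>\<phi>(a)\<close>, which lies in B but not in P.\<close>

lemma CHAR_eq_prime:
  assumes "prime p" and "of_nat p = (0::'a::comm_ring_1)"
  shows "CHAR('a) = p"
proof -
  have "CHAR('a) dvd p" using assms(2) of_nat_eq_0_iff_char_dvd by blast
  with assms(1) show ?thesis by (auto simp: prime_nat_iff)
qed

lemma ideal_zero: "is_ideal I \<Longrightarrow> 0 \<in> I"
  unfolding is_ideal_def by blast

lemma ideal_add: "is_ideal I \<Longrightarrow> x \<in> I \<Longrightarrow> y \<in> I \<Longrightarrow> x + y \<in> I"
  unfolding is_ideal_def by blast

lemma ideal_mult_left: "is_ideal I \<Longrightarrow> x \<in> I \<Longrightarrow> r * x \<in> I"
  unfolding is_ideal_def by blast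

lemma ideal_mult_right: "is_ideal I \<Longrightarrow> x \<in> I \<Longrightarrow> x * r \<in> I"
  unfolding is_ideal_def by (metis mult.commute)

lemma ideal_diff: "is_ideal I \<Longrightarrow> x \<in> I \<Longrightarrow> y \<in> I \<Longrightarrow> x - y \<in> I"
  using ideal_add[of I x "(-1) * y"] ideal_mult_left[of I y "-1"] by simp

lemma ideal_sum: "is_ideal I \<Longrightarrow> (\<And>i. i \<in> A \<Longrightarrow> f i \<in> I) \<Longrightarrow> sum f A \<in> I"
  by (induction A rule: infinite_finite_induct) (auto intro: ideal_zero ideal_add)

lemma ideal_eq_UNIV_iff_one: "is_ideal I \<Longrightarrow> I = UNIV \<longleftrightarrow> 1 \<in> I"
  using ideal_mult_left[of I 1] by auto

lemma prime_ideal_one_notin: "is_prime_ideal P \<Longrightarrow> 1 \<notin> P"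
  unfolding is_prime_ideal_def using ideal_eq_UNIV_iff_one by blast

lemma prime_ideal_mult_notin:
  "is_prime_ideal P \<Longrightarrow> x \<notin> P \<Longrightarrow> y \<notin> P \<Longrightarrow> x * y \<notin> P"
  unfolding is_prime_ideal_def by blast

lemma is_ideal_const_contraction:
  assumes "is_ideal B"
  shows "is_ideal {a. [:a:] \<in> B}"
  unfolding is_ideal_def
proof (intro conjI ballI allI impI)
  show "0 \<in> {a. [:a:] \<in> B}" using ideal_zero[OF assms] by simp
next
  fix x y assume "x \<in> {a. [:a:] \<in> B}" "y \<in> {a. [:a:] \<in> B}"
  then have "[:x:] + [:y:] \<in> B" using ideal_add[OF assms] by blast
  then show "x + y \<in> {a. [:a:] \<in> B}" by simp
next
  fix r x assume "x \<in> {a. [:a:] \<in> B}"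
  then have "[:r:] * [:x:] \<in> B" using ideal_mult_left[OF assms] by blast
  then show "r * x \<in> {a. [:a:] \<in> B}" by (simp add: mult.commute)
qed

lemma is_ideal_poly_ext_ideal:
  assumes "is_ideal P"
  shows "is_ideal (poly_ext_ideal P)"
  unfolding is_ideal_def poly_ext_ideal_def
proof (intro conjI ballI allI impI)
  show "0 \<in> {f. \<forall>i. coeff f i \<in> P}" using ideal_zero[OF assms] by simp
next
  fix f g assume "f \<in> {f. \<forall>i. coeff f i \<in> P}" "g \<in> {f. \<forall>i. coeff f i \<in> P}"
  then show "f + g \<in> {f. \<forall>i. coeff f i \<in> P}" using ideal_add[OF assms] by simp
next
  fix r f assume "f \<in> {f. \<forall>i. coeff f i \<in> P}"
  then have "coeff (r * f) i \<in> P" for i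
    unfolding coeff_mult by (auto intro!: ideal_sum[OF assms] ideal_mult_left[OF assms])
  then show "r * f \<in> {f. \<forall>i. coeff f i \<in> P}" by simp
qed

lemma coeff_mult_lowest_mod_ideal:
  assumes "is_ideal P"
    and "\<And>k. k < i \<Longrightarrow> coeff f k \<in> P" and "\<And>k. k < j \<Longrightarrow> coeff g k \<in> P"
  shows "coeff (f * g) (i + j) - coeff f i * coeff g j \<in> P"
proof -
  have "coeff (f * g) (i + j) - coeff f i * coeff g (i + j - i)
      = (\<Sum>k\<in>{..i+j} - {i}. coeff f k * coeff g (i + j - k))"
    unfolding coeff_mult by (subst sum.remove[of _ i]) auto
  also have "\<dots> \<in> P"
  proof (rule ideal_sum[OF assms(1)])
    fix k assume "k \<in> {..i+j} - {i}"
    then consider "k < i" | "i + j - k < j" by fastforce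
    then show "coeff f k * coeff g (i + j - k) \<in> P"
      by cases (use assms in \<open>auto intro: ideal_mult_left ideal_mult_right\<close>)
  qed
  finally show ?thesis by simp
qed

lemma is_prime_ideal_poly_ext_ideal:
  assumes "is_prime_ideal P"
  shows "is_prime_ideal (poly_ext_ideal P)"
proof -
  have P: "is_ideal P" using assms unfolding is_prime_ideal_def by blast
  have "coeff 1 0 \<notin> P"
    using prime_ideal_one_notin[OF assms] by simp
  then have "1 \<notin> poly_ext_ideal P" unfolding poly_ext_ideal_def by blast
  then have proper: "poly_ext_ideal P \<noteq> UNIV" by blast
  have "f \<in> poly_ext_ideal P \<or> g \<in> poly_ext_ideal P" if fg: "f * g \<in> poly_ext_ideal P" for f g
  proof (rule ccontr)
    assume "\<not> ?thesis"
    then obtain i0 j0 where "coeff f i0 \<notin> P" "coeff g j0 \<notin> P"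
      unfolding poly_ext_ideal_def by blast
    define i where "i = (LEAST i. coeff f i \<notin> P)"
    define j where "j = (LEAST j. coeff g j \<notin> P)"
    have fi: "coeff f i \<notin> P" and gj: "coeff g j \<notin> P"
      unfolding i_def j_def by (rule LeastI, fact)+
    have "coeff f k \<in> P" if "k < i" for k
      using not_less_Least[of k "\<lambda>i. coeff f i \<notin> P"] that unfolding i_def by blast
    moreover have "coeff g k \<in> P" if "k < j" for k
      using not_less_Least[of k "\<lambda>j. coeff g j \<notin> P"] that unfolding j_def by blast
    ultimately have lowest: "coeff (f * g) (i + j) - coeff f i * coeff g j \<in> P"
      by (rule coeff_mult_lowest_mod_ideal[OF P])
    have "coeff (f * g) (i + j) \<in> P" using fg unfolding poly_ext_ideal_def by blast
    from ideal_diff[OF P this lowest]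
    have "coeff f i * coeff g j \<in> P" by simp
    then show False using prime_ideal_mult_notin[OF assms fi gj] by blast
  qed
  then show ?thesis
    using is_ideal_poly_ext_ideal[OF P] proper unfolding is_prime_ideal_def by blast
qed

lemma cartier_map_zero: "cartier_map p e \<phi> \<Longrightarrow> \<phi> 0 = 0"
  unfolding cartier_map_def by (metis add_cancel_right_right)

lemma cartier_map_comp:
  assumes "cartier_map p e1 \<phi>1" and "cartier_map p e2 \<phi>2"
  shows "cartier_map p (e2 + e1) (\<phi>1 \<circ> \<phi>2)"
proof -
  have "r ^ (p ^ (e2 + e1)) = (r ^ (p ^ e1)) ^ (p ^ e2)" for r :: 'a
    by (simp add: power_add power_mult[symmetric] mult.commute)
  then show ?thesis using assms unfolding cartier_map_def by simp
qed

lemma cartier_map_funpow: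
  assumes "cartier_map p e \<phi>"
  shows "cartier_map p (k * e) (\<phi> ^^ k)"
proof (induction k)
  case 0
  then show ?case by (simp add: cartier_map_def)
next
  case (Suc k)
  have "cartier_map p (e + k * e) (\<phi> ^^ k \<circ> \<phi>)" by (rule cartier_map_comp[OF Suc assms])
  then show ?case by (simp only: funpow_Suc_right mult_Suc)
qed

lemma cartier_map_premult:
  assumes "cartier_map p e \<phi>"
  shows "cartier_map p e (\<lambda>x. \<phi> (c * x))"
proof -
  have "\<phi> (c * (r ^ p ^ e * x)) = r * \<phi> (c * x)" for r x
    using assms unfolding cartier_map_def by (metis mult.left_commute)
  then show ?thesis using assms unfolding cartier_map_def by (simp add: distrib_left)
qed

lemma cartier_map_power_pred:
  assumes "cartier_map p e \<phi>" and "p > 0"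
  shows "\<phi> (a ^ (p ^ e - 1) * x * a) = a * \<phi> x"
proof -
  have "a ^ (p ^ e - 1) * x * a = (a ^ (p ^ e - 1) * a) * x"
    by (simp only: mult_ac)
  also have "\<dots> = a ^ (p ^ e) * x"
    using power_minus_mult[of "p ^ e" a] assms(2) by simp
  finally have "a ^ (p ^ e - 1) * x * a = a ^ (p ^ e) * x" .
  then show ?thesis using assms(1) unfolding cartier_map_def by simp
qed

lemma compatible_funpow: "compatible \<phi> I \<Longrightarrow> compatible (\<phi> ^^ k) I"
  by (induction k) (auto simp: compatible_def)

lemma compatible_premult: "is_ideal I \<Longrightarrow> compatible \<phi> I \<Longrightarrow> compatible (\<lambda>x. \<phi> (c * x)) I"
  unfolding compatible_def using ideal_mult_left by blast

lemma cartier_map_funpow_not_subset: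
  assumes "cartier_map p e \<phi>" and "p > 0" and "is_prime_ideal P" and "\<not> range \<phi> \<subseteq> P"
  shows "\<not> range (\<phi> ^^ k) \<subseteq> P"
proof (induction k)
  case 0
  then show ?case using prime_ideal_one_notin[OF assms(3)] by auto
next
  case (Suc k)
  then obtain x where x: "(\<phi> ^^ k) x \<notin> P" by blast
  obtain c where c: "\<phi> c \<notin> P" using assms(4) by blast
  define u where "u = \<phi> c"
  have "\<phi> ((u ^ (p ^ (k * e) - 1) * x) ^ (p ^ e) * c) = u ^ (p ^ (k * e) - 1) * x * u"
    using assms(1) unfolding cartier_map_def u_def by simp
  then have "(\<phi> ^^ Suc k) ((u ^ (p ^ (k * e) - 1) * x) ^ (p ^ e) * c)
      = (\<phi> ^^ k) (u ^ (p ^ (k * e) - 1) * x * u)"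
    by (simp only: funpow_Suc_right comp_apply)
  also have "\<dots> = u * (\<phi> ^^ k) x"
    by (rule cartier_map_power_pred[OF cartier_map_funpow[OF assms(1)] assms(2)])
  finally show ?case
    using prime_ideal_mult_notin[OF assms(3) c[folded u_def] x] by (metis rangeI subsetD)
qed

text \<open>The witness is \<open>\<psi> y = (\<phi> ^^ Suc d) (a ^ (p ^ E - 1) * x * y)\<close> for some x with
  \<open>(\<phi> ^^ Suc d) x \<notin> P\<close> and E = Suc d * e, so that \<open>\<psi> a = a * (\<phi> ^^ Suc d) x\<close>.\<close>
lemma cartier_map_large_exponent:
  assumes "prime p" and "e > 0" and "cartier_map p e \<phi>" and "compatible \<phi> P"
    and "\<not> range \<phi> \<subseteq> P" and "is_prime_ideal P" and "a \<notin> P"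
  shows "\<exists>E \<psi>. E > 0 \<and> d < p ^ E \<and> cartier_map p E \<psi> \<and> compatible \<psi> P \<and> \<psi> a \<notin> P"
proof -
  have p: "p \<ge> 2" using assms(1) prime_ge_2_nat by blast
  define E where "E = Suc d * e"
  have "d < 2 ^ Suc d" using less_exp[of "Suc d"] by simp
  also have "\<dots> \<le> p ^ Suc d" using p by (intro power_mono) simp_all
  also have "\<dots> \<le> p ^ E"
    unfolding E_def using p assms(2) mult_le_mono2[of 1 e "Suc d"] by (intro power_increasing) auto
  finally have large: "d < p ^ E" .
  define \<chi> where "\<chi> = \<phi> ^^ Suc d"
  have \<chi>: "cartier_map p E \<chi>"
    unfolding E_def \<chi>_def by (rule cartier_map_funpow[OF assms(3)])
  obtain x where x: "\<chi> x \<notin> P"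
    using cartier_map_funpow_not_subset[OF assms(3) _ assms(6,5)] p unfolding \<chi>_def by fastforce
  define \<psi> where "\<psi> y = \<chi> (a ^ (p ^ E - 1) * x * y)" for y
  have "cartier_map p E \<psi>"
    unfolding \<psi>_def by (rule cartier_map_premult[OF \<chi>])
  moreover have "\<psi> a = a * \<chi> x"
    unfolding \<psi>_def using p by (intro cartier_map_power_pred[OF \<chi>]) simp
  moreover have "compatible \<psi> P"
    unfolding \<psi>_def \<chi>_def using assms(4,6) compatible_funpow compatible_premult
    unfolding is_prime_ideal_def by blast
  moreover have "E > 0" unfolding E_def using assms(2) by simp
  ultimately show ?thesis
    using large prime_ideal_mult_notin[OF assms(6,7) x] by metis
qed

text \<open>The map \<open>\<phi> \<otimes> T\<close> on \<open>R[t]\<close>, where T sends \<open>t^i\<close> to \<open>t^((i - m) div q)\<close> if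
  \<open>i \<equiv> m (mod q)\<close> and to 0 otherwise. The sum may stop at the degree of f only for q > 0.\<close>
definition poly_cartier :: "nat \<Rightarrow> nat \<Rightarrow> ('a::comm_ring_1 \<Rightarrow> 'a) \<Rightarrow> 'a poly \<Rightarrow> 'a poly" where
  "poly_cartier q m \<phi> f = (\<Sum>j\<le>degree f. monom (\<phi> (coeff f (j * q + m))) j)"

lemma coeff_poly_cartier:
  assumes "\<phi> 0 = 0" and "q > 0"
  shows "coeff (poly_cartier q m \<phi> f) j = \<phi> (coeff f (j * q + m))"
proof (cases "j \<le> degree f")
  case False
  moreover have "j * 1 \<le> j * q" using assms(2) by (intro mult_le_mono2) simp
  ultimately have "coeff f (j * q + m) = 0" by (intro coeff_eq_0) linarith
  with False assms(1) show ?thesis unfolding poly_cartier_def coeff_sum by simp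
qed (simp add: poly_cartier_def coeff_sum)

lemma poly_cartier_add:
  assumes "cartier_map p e \<phi>" and "q > 0"
  shows "poly_cartier q m \<phi> (f + g) = poly_cartier q m \<phi> f + poly_cartier q m \<phi> g"
  using assms cartier_map_zero[OF assms(1)]
  by (simp add: poly_eq_iff coeff_poly_cartier cartier_map_def)

lemma poly_cartier_smult:
  assumes "cartier_map p e \<phi>" and "q = p ^ e" and "q > 0"
  shows "poly_cartier q m \<phi> (smult (a ^ q) f) = smult a (poly_cartier q m \<phi> f)"
  using assms cartier_map_zero[OF assms(1)]
  by (simp add: poly_eq_iff coeff_poly_cartier cartier_map_def)

lemma poly_cartier_monom_mult:
  assumes "\<phi> 0 = 0" and "m < q"
  shows "poly_cartier q m \<phi> (monom 1 q * h) = monom 1 1 * poly_cartier q m \<phi> h"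
proof (rule poly_eqI)
  fix j
  have "q > 0" using assms(2) by simp
  then show "coeff (poly_cartier q m \<phi> (monom 1 q * h)) j = coeff (monom 1 1 * poly_cartier q m \<phi> h) j"
    using assms by (cases j) (simp_all add: coeff_poly_cartier coeff_monom_mult)
qed

lemma poly_cartier_low_degree:
  assumes "\<phi> 0 = 0" and "degree f < q"
  shows "poly_cartier q m \<phi> f = [:\<phi> (coeff f m):]"
proof (rule poly_eqI)
  fix j
  have "q > 0" using assms(2) by simp
  moreover have "coeff f (Suc i * q + m) = 0" for i
    using assms(2) by (intro coeff_eq_0) simp
  ultimately show "coeff (poly_cartier q m \<phi> f) j = coeff [:\<phi> (coeff f m):] j"
    using assms(1) by (cases j) (simp_all add: coeff_poly_cartier)
qed

lemma compatible_poly_cartier: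
  assumes "compatible \<phi> P" and "\<phi> 0 = 0" and "q > 0"
  shows "compatible (poly_cartier q m \<phi>) (poly_ext_ideal P)"
  using assms unfolding compatible_def poly_ext_ideal_def by (auto simp: coeff_poly_cartier)

text \<open>The Frobenius of R[t] sends \<open>pCons a r = a + t r\<close> to \<open>a^q + t^q r^q\<close>, which reduces
  linearity over R[t] to linearity over R and the shift rule for \<open>t^q\<close>.\<close>
lemma cartier_map_poly_cartier:
  assumes "prime p" and "of_nat p = (0::'a::comm_ring_1)"
    and "cartier_map p e \<phi>" and "m < p ^ e"
  shows "cartier_map p e (poly_cartier (p ^ e) m (\<phi> :: 'a \<Rightarrow> 'a))"
proof -
  define q where "q = p ^ e"
  have q: "q > 0" using assms(4) unfolding q_def by (rule le_less_trans[OF le0])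
  have char: "prime CHAR('a poly)" and q_char: "q = CHAR('a poly) ^ e"
    using CHAR_eq_prime[OF assms(1,2)] assms(1) q_def by simp_all
  have "poly_cartier q m \<phi> (r ^ q * x) = r * poly_cartier q m \<phi> x" for r x
  proof (induction r)
    case 0
    then show ?case
      using q cartier_map_zero[OF assms(3)] by (simp add: poly_eq_iff coeff_poly_cartier power_0_left)
  next
    case (pCons a r)
    have split: "pCons a r = [:a:] + monom 1 1 * r"
      by (simp add: poly_eq_iff coeff_monom_mult coeff_pCons')
    have "pCons a r ^ q = [:a:] ^ q + (monom 1 1 * r) ^ q"
      unfolding split by (rule freshmans_dream'[OF char q_char])
    then have "pCons a r ^ q * x = smult (a ^ q) x + monom 1 q * (r ^ q * x)"
      by (simp add: poly_const_pow monom_power algebra_simps)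
    then have "poly_cartier q m \<phi> (pCons a r ^ q * x)
        = smult a (poly_cartier q m \<phi> x) + monom 1 1 * (r * poly_cartier q m \<phi> x)"
      using poly_cartier_add[OF assms(3) q] poly_cartier_smult[OF assms(3) q_def q]
        poly_cartier_monom_mult[of \<phi> m q, OF cartier_map_zero[OF assms(3)]] assms(4) pCons.IH
      by (simp add: q_def)
    also have "\<dots> = pCons a r * poly_cartier q m \<phi> x"
      unfolding split by (simp add: algebra_simps)
    finally show ?case .
  qed
  then show ?thesis
    using poly_cartier_add[OF assms(3) q] unfolding cartier_map_def q_def by blast
qed

lemma poly_cartier_mem_if_compatible:
  assumes "prime p" and "of_nat p = (0::'a::comm_ring_1)"
    and B: "\<forall>e>0. \<forall>\<Phi>. cartier_map p e \<Phi> \<and> compatible \<Phi> (poly_ext_ideal P) \<longrightarrow> compatible \<Phi> B"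
    and "e > 0" and "cartier_map p e \<phi>" and "compatible \<phi> P" and "m < p ^ e" and "g \<in> B"
  shows "poly_cartier (p ^ e) m (\<phi> :: 'a \<Rightarrow> 'a) g \<in> B"
proof -
  have "cartier_map p e (poly_cartier (p ^ e) m \<phi>)"
    by (rule cartier_map_poly_cartier[OF assms(1,2,5,7)])
  moreover have "compatible (poly_cartier (p ^ e) m \<phi>) (poly_ext_ideal P)"
    using assms(1) by (intro compatible_poly_cartier[OF assms(6) cartier_map_zero[OF assms(5)]])
      (simp add: prime_gt_0_nat)
  ultimately show ?thesis using B assms(4,8) unfolding compatible_def by blast
qed

text \<open>\<open>poly_cartier q 0 \<phi>\<close> restricts to \<open>\<phi>\<close> on constants.\<close>
lemma const_contraction_subset:
  assumes "prime p" and "of_nat p = (0::'a::comm_ring_1)" and "purely_F_regular_along p P"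
    and "is_ideal B" and "B \<noteq> UNIV"
    and "\<forall>e>0. \<forall>\<Phi>. cartier_map p e \<Phi> \<and> compatible \<Phi> (poly_ext_ideal P) \<longrightarrow> compatible \<Phi> B"
  shows "{a. [:a:] \<in> B} \<subseteq> (P :: 'a set)"
proof -
  have "1 \<notin> B" using assms(4,5) ideal_eq_UNIV_iff_one by blast
  then have "{a. [:a:] \<in> B} \<noteq> UNIV" by (metis UNIV_I mem_Collect_eq one_pCons)
  moreover have "compatible \<phi> {a. [:a:] \<in> B}"
    if "e > 0" "cartier_map p e \<phi>" "compatible \<phi> P" for e \<phi>
  proof -
    have "p ^ e > 0" using assms(1) by (simp add: prime_gt_0_nat)
    then have "poly_cartier (p ^ e) 0 \<phi> [:a:] = [:\<phi> a:]" for a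
      using poly_cartier_low_degree[where \<phi> = \<phi>, OF cartier_map_zero[OF that(2)]] by simp
    then have "[:\<phi> a:] \<in> B" if "[:a:] \<in> B" for a
      using poly_cartier_mem_if_compatible[OF assms(1,2,6) \<open>e > 0\<close> \<open>cartier_map p e \<phi>\<close>
          \<open>compatible \<phi> P\<close> \<open>p ^ e > 0\<close> that] by simp
    then show ?thesis unfolding compatible_def by auto
  qed
  ultimately show ?thesis
    using assms(3) is_ideal_const_contraction[OF assms(4)] unfolding purely_F_regular_along_def by blast
qed

lemma subset_poly_ext_ideal_if_compatible:
  assumes "prime p" and "of_nat p = (0::'a::comm_ring_1)"
    and "is_prime_ideal P" and "purely_F_regular_along p P"
    and "is_ideal B" and "B \<noteq> UNIV"
    and B: "\<forall>e>0. \<forall>\<Phi>. cartier_map p e \<Phi> \<and> compatible \<Phi> (poly_ext_ideal P) \<longrightarrow> compatible \<Phi> B"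
  shows "B \<subseteq> poly_ext_ideal (P :: 'a set)"
proof (rule ccontr)
  assume "\<not> ?thesis"
  then obtain f n where f: "f \<in> B" and a: "coeff f n \<notin> P"
    unfolding poly_ext_ideal_def by blast
  have "n \<le> degree f"
    using a ideal_zero[of P] assms(3) coeff_eq_0[of f n] unfolding is_prime_ideal_def by fastforce
  have "\<exists>e>0. \<exists>\<phi>. cartier_map p e \<phi> \<and> compatible \<phi> P \<and> \<not> range \<phi> \<subseteq> P"
    using assms(4) unfolding purely_F_regular_along_def by (rule conjunct1)
  then obtain e0 \<phi>0 where "e0 > 0" "cartier_map p e0 \<phi>0" "compatible \<phi>0 P" "\<not> range \<phi>0 \<subseteq> P"
    by blast
  then obtain E \<psi> where E: "E > 0" "degree f < p ^ E" "cartier_map p E \<psi>" "compatible \<psi> P"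
    and \<psi>: "\<psi> (coeff f n) \<notin> P"
    using cartier_map_large_exponent[OF assms(1) _ _ _ _ assms(3) a, where d = "degree f"] by blast
  have "poly_cartier (p ^ E) n \<psi> f = [:\<psi> (coeff f n):]"
    by (rule poly_cartier_low_degree[where \<phi> = \<psi>, OF cartier_map_zero[OF E(3)] E(2)])
  moreover have "poly_cartier (p ^ E) n \<psi> f \<in> B"
    using \<open>n \<le> degree f\<close> E by (intro poly_cartier_mem_if_compatible[OF assms(1,2) B _ _ _ _ f]) auto
  ultimately have "\<psi> (coeff f n) \<in> {a. [:a:] \<in> B}" by simp
  then show False
    using const_contraction_subset[OF assms(1,2,4-6) B] \<psi> by blast
qed

theorem proposition2p15:
  fixes p :: nat and P :: "'a::comm_ring_1 set"
  assumes "prime p" and "of_nat p = (0::'a)"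
    and "noetherian_ring TYPE('a)" and "F_finite p TYPE('a)"
    and "is_prime_ideal P"
    and "purely_F_regular_along p P"
  shows "is_prime_ideal (poly_ext_ideal P) \<and> purely_F_regular_along p (poly_ext_ideal P)"
proof -
  obtain e \<phi> c where e: "e > 0" "cartier_map p e \<phi>" "compatible \<phi> P" and c: "\<phi> c \<notin> P"
    using assms(6) unfolding purely_F_regular_along_def by blast
  have "p ^ e > 0" using assms(1) by (simp add: prime_gt_0_nat)
  have "cartier_map p e (poly_cartier (p ^ e) 0 \<phi>)"
    by (rule cartier_map_poly_cartier[OF assms(1,2) e(2) \<open>p ^ e > 0\<close>])
  moreover have "compatible (poly_cartier (p ^ e) 0 \<phi>) (poly_ext_ideal P)"
    by (rule compatible_poly_cartier[OF e(3) cartier_map_zero[OF e(2)] \<open>p ^ e > 0\<close>])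
  moreover have "poly_cartier (p ^ e) 0 \<phi> [:c:] \<notin> poly_ext_ideal P"
    using c poly_cartier_low_degree[where \<phi> = \<phi> and f = "[:c:]", OF cartier_map_zero[OF e(2)]] \<open>p ^ e > 0\<close>
    unfolding poly_ext_ideal_def by (auto intro!: exI[of _ 0])
  ultimately show ?thesis
    using e(1) is_prime_ideal_poly_ext_ideal[OF assms(5)]
      subset_poly_ext_ideal_if_compatible[OF assms(1,2,5,6)]
    unfolding purely_F_regular_along_def[of p "poly_ext_ideal P"] by blast
qed

end
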